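(* Let $q\ge 2$, $n\ge 1$ and $\varepsilon\in\mathbb{N}$ with $\varepsilon\le n$. Let $x\in\mathbb{Z}_q^n$ be a hidden vector, and suppose the attacker has access to an oracle $\texttt{Match}_{x,\varepsilon}$ which, on a query $y\in\mathbb{Z}_q^n$, returns $1$ if $d(x,y)\le\varepsilon$ and $0$ otherwise, and which additionally reveals the set of error positions $\{i: x_i\neq y_i\}$ (but not the values $x_i$) whenever $d(x,y)\le\varepsilon$. Then there is an adaptive query strategy that recovers $x$ using, in the worst case, $\mathcal{O}(q^{n-\varepsilon}+q)$ queries to $\texttt{Match}_{x,\varepsilon}$.
   Context: $\mathbb{Z}_q^n=\{0,\dots,q-1\}^n$ is equipped with the Hamming distance $d(x,y)=|\{i\in\{1,\dots,n\}: x_i\neq y_i\}|$. The attacker may choose each query adaptively based on previous oracle answers; complexity is measured as the number of oracle queries. *)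

theory Defs
  imports Main
begin

definition Zq :: "nat \<Rightarrow> nat \<Rightarrow> nat list set" where
  "Zq q n = {v. length v = n \<and> (\<forall>a\<in>set v. a < q)}"

definition err_pos :: "nat list \<Rightarrow> nat list \<Rightarrow> nat set" where
  "err_pos x y = {i. i < length x \<and> x ! i \<noteq> y ! i}"

definition hamming :: "nat list \<Rightarrow> nat list \<Rightarrow> nat" where
  "hamming x y = card (err_pos x y)"

text \<open>Oracle answer: None = 0; Some E = 1 together with the set E of error positions.\<close>

definition Match :: "nat list \<Rightarrow> nat \<Rightarrow> nat list \<Rightarrow> nat set option" where
  "Match x eps y = (if hamming x y \<le> eps then Some (err_pos x y) else None)"

text \<open>An adaptive query strategy is a decision tree: either output a guess, or
  ask a query and continue depending on the oracle answer.\<close>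

datatype strategy = Output "nat list" | Query "nat list" "nat set option \<Rightarrow> strategy"

primrec run :: "strategy \<Rightarrow> nat list \<Rightarrow> nat \<Rightarrow> nat list \<times> nat list list" where
  "run (Output v) x eps = (v, [])"
| "run (Query y f) x eps =
     (let r = run (f (Match x eps y)) x eps in (fst r, y # snd r))"

end

theory Submission
  imports Defs
begin

text \<open>Phase one asks every vector that is an arbitrary prefix of length n - eps padded with eps
  zeros. The padded prefix of x itself differs from x only in the last eps coordinates, so some
  query is answered positively; the first such query y and its error set E are remembered. Phase
  two asks, for each value v < q, the vector y with all coordinates in E overwritten by v. Its
  error set is the part of E where x differs from v and, having at most as many elements as E,
  is revealed again; so x ! i for i in E is the unique v whose answer does not contain i.\<close>

primrec query_all ::
    "nat list list \<Rightarrow> ((nat list \<times> nat set option) list \<Rightarrow> strategy) \<Rightarrow> strategy" where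
  "query_all [] k = k []"
| "query_all (y # ys) k = Query y (\<lambda>a. query_all ys (\<lambda>ps. k ((y, a) # ps)))"

lemma run_query_all:
  "run (query_all ys k) x eps =
     (let r = run (k (map (\<lambda>y. (y, Match x eps y)) ys)) x eps in (fst r, ys @ snd r))"
  by (induction ys arbitrary: k) (simp_all add: Let_def)

definition padded_prefixes :: "nat \<Rightarrow> nat \<Rightarrow> nat \<Rightarrow> nat list list" where
  "padded_prefixes q n eps = map (\<lambda>p. p @ replicate eps 0) (List.n_lists (n - eps) [0..<q])"

lemma length_padded_prefixes: "length (padded_prefixes q n eps) = q ^ (n - eps)"
  by (simp add: padded_prefixes_def length_n_lists)

lemma padded_prefixes_subset_Zq:
  assumes "eps \<le> n" "0 < q"
  shows "set (padded_prefixes q n eps) \<subseteq> Zq q n"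
  using assms by (auto simp: padded_prefixes_def Zq_def set_n_lists)

lemma padded_prefix_close:
  assumes x: "x \<in> Zq q n" and "eps \<le> n"
  shows "\<exists>y \<in> set (padded_prefixes q n eps). hamming x y \<le> eps"
proof
  define y where "y = take (n - eps) x @ replicate eps 0"
  have lx: "length x = n" and xq: "set x \<subseteq> {..<q}"
    using x by (auto simp: Zq_def)
  show "y \<in> set (padded_prefixes q n eps)"
    using lx xq \<open>eps \<le> n\<close> set_take_subset[of "n - eps" x]
    by (auto simp: padded_prefixes_def set_n_lists y_def image_iff
             intro!: exI[of _ "take (n - eps) x"])
  have "err_pos x y \<subseteq> {n - eps..<n}"
    using lx by (auto simp: err_pos_def y_def nth_append)
  then have "hamming x y \<le> card {n - eps..<n}"
    unfolding hamming_def by (intro card_mono) auto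
  then show "hamming x y \<le> eps"
    using \<open>eps \<le> n\<close> by simp
qed

lemma find_first_match:
  assumes "y \<in> set ys" "hamming x y \<le> eps"
  obtains y' E where "find (\<lambda>(y, a). a \<noteq> None) (map (\<lambda>y. (y, Match x eps y)) ys) = Some (y', Some E)"
    and "y' \<in> set ys" "hamming x y' \<le> eps" "E = err_pos x y'"
proof -
  let ?ps = "map (\<lambda>y. (y, Match x eps y)) ys"
  have "(y, Match x eps y) \<in> set ?ps" "Match x eps y \<noteq> None"
    using assms by (auto simp: Match_def)
  then have "find (\<lambda>(y, a). a \<noteq> None) ?ps \<noteq> None"
    unfolding find_None_iff by blast
  then obtain y' a where found: "find (\<lambda>(y, a). a \<noteq> None) ?ps = Some (y', a)"
    by auto
  then have "(y', a) \<in> set ?ps" "a \<noteq> None"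
    by (auto simp: find_Some_iff)
  then show thesis
    using found that by (auto simp: Match_def split: if_splits)
qed

definition overwrite_on :: "nat set \<Rightarrow> nat \<Rightarrow> nat list \<Rightarrow> nat list" where
  "overwrite_on E v y = map (\<lambda>i. if i \<in> E then v else y ! i) [0..<length y]"

lemma nth_overwrite_on:
  "i < length y \<Longrightarrow> overwrite_on E v y ! i = (if i \<in> E then v else y ! i)"
  by (simp add: overwrite_on_def)

lemma err_pos_overwrite_on:
  assumes "length y = length x"
  shows "err_pos x (overwrite_on (err_pos x y) v y) = {i \<in> err_pos x y. x ! i \<noteq> v}"
proof (rule set_eqI)
  fix i
  show "i \<in> err_pos x (overwrite_on (err_pos x y) v y) \<longleftrightarrow> i \<in> {i \<in> err_pos x y. x ! i \<noteq> v}"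
    using assms by (cases "i < length x"; cases "x ! i = y ! i") (simp_all add: err_pos_def nth_overwrite_on)
qed

lemma Match_overwrite_on:
  assumes "length y = length x" "hamming x y \<le> eps"
  shows "Match x eps (overwrite_on (err_pos x y) v y) = Some {i \<in> err_pos x y. x ! i \<noteq> v}"
proof -
  have "card {i \<in> err_pos x y. x ! i \<noteq> v} \<le> card (err_pos x y)"
    by (intro card_mono) (auto simp: err_pos_def)
  then show ?thesis
    using assms by (simp add: Match_def hamming_def err_pos_overwrite_on)
qed

definition decode_on :: "nat set \<Rightarrow> (nat \<Rightarrow> nat set) \<Rightarrow> nat list \<Rightarrow> nat list" where
  "decode_on E errs y = map (\<lambda>i. if i \<in> E then LEAST v. i \<notin> errs v else y ! i) [0..<length y]"

lemma decode_on_err_pos: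
  assumes x: "x \<in> Zq q n" and "length y = n"
    and errs: "\<And>v. v < q \<Longrightarrow> errs v = {i \<in> err_pos x y. x ! i \<noteq> v}"
  shows "decode_on (err_pos x y) errs y = x"
proof (rule nth_equalityI)
  have lx: "length x = n" and xq: "\<And>i. i < n \<Longrightarrow> x ! i < q"
    using x by (auto simp: Zq_def)
  then show "length (decode_on (err_pos x y) errs y) = length x"
    using \<open>length y = n\<close> by (simp add: decode_on_def)
  fix i
  assume "i < length (decode_on (err_pos x y) errs y)"
  then have i: "i < n"
    using \<open>length y = n\<close> by (simp add: decode_on_def)
  have "(LEAST v. i \<notin> errs v) = x ! i" if "i \<in> err_pos x y"
  proof (rule Least_equality)
    show "i \<notin> errs (x ! i)"
      using errs[OF xq[OF i]] by simp
    show "x ! i \<le> v" if "i \<notin> errs v" for v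
      using errs[of v] \<open>i \<in> err_pos x y\<close> \<open>i \<notin> errs v\<close> xq[OF i] by (cases "v < q") auto
  qed
  then show "decode_on (err_pos x y) errs y ! i = x ! i"
    using i \<open>length y = n\<close> lx by (auto simp: decode_on_def err_pos_def)
qed

definition recover_on :: "nat \<Rightarrow> nat list \<Rightarrow> nat set \<Rightarrow> strategy" where
  \<comment> \<open>\<open>ps ! v\<close> is junk for \<open>v \<ge> q\<close>; harmless, since the \<open>LEAST\<close> in \<open>decode_on\<close> is attained below \<open>q\<close>\<close>
  "recover_on q y E = query_all (map (\<lambda>v. overwrite_on E v y) [0..<q])
     (\<lambda>ps. Output (decode_on E (\<lambda>v. the (snd (ps ! v))) y))"

lemma run_recover_on:
  assumes x: "x \<in> Zq q n" and y: "y \<in> Zq q n" and "hamming x y \<le> eps"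
  shows "run (recover_on q y (err_pos x y)) x eps =
           (x, map (\<lambda>v. overwrite_on (err_pos x y) v y) [0..<q])"
proof -
  let ?ps = "map (\<lambda>v. (overwrite_on (err_pos x y) v y,
                         Match x eps (overwrite_on (err_pos x y) v y))) [0..<q]"
  have "length y = length x" "length y = n"
    using x y by (simp_all add: Zq_def)
  then have "decode_on (err_pos x y) (\<lambda>v. the (snd (?ps ! v))) y = x"
    using \<open>hamming x y \<le> eps\<close> by (intro decode_on_err_pos[OF x]) (simp_all add: Match_overwrite_on)
  then show ?thesis
    by (simp add: recover_on_def run_query_all comp_def)
qed

lemma overwrite_on_Zq:
  assumes "y \<in> Zq q n" "v < q"
  shows "overwrite_on E v y \<in> Zq q n"
  using assms by (auto simp: Zq_def overwrite_on_def)

definition locate_and_recover :: "nat \<Rightarrow> nat \<Rightarrow> nat \<Rightarrow> strategy" where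
  "locate_and_recover q n eps = query_all (padded_prefixes q n eps)
     (\<lambda>ps. case find (\<lambda>(y, a). a \<noteq> None) ps of
             Some (y, Some E) \<Rightarrow> recover_on q y E
           | _ \<Rightarrow> Output [])" \<comment> \<open>the fallback is unreachable by \<open>padded_prefix_close\<close>\<close>

lemma run_locate_and_recover:
  assumes x: "x \<in> Zq q n" and "eps \<le> n" "0 < q"
  shows "fst (run (locate_and_recover q n eps) x eps) = x"
    and "set (snd (run (locate_and_recover q n eps) x eps)) \<subseteq> Zq q n"
    and "length (snd (run (locate_and_recover q n eps) x eps)) = q ^ (n - eps) + q"
proof -
  obtain y0 where "y0 \<in> set (padded_prefixes q n eps)" "hamming x y0 \<le> eps"
    using padded_prefix_close[OF x \<open>eps \<le> n\<close>] by blast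
  then obtain y E
    where found: "find (\<lambda>(y, a). a \<noteq> None)
             (map (\<lambda>y. (y, Match x eps y)) (padded_prefixes q n eps)) = Some (y, Some E)"
      and "y \<in> set (padded_prefixes q n eps)" and close: "hamming x y \<le> eps"
      and E: "E = err_pos x y"
    by (rule find_first_match)
  then have y: "y \<in> Zq q n"
    using padded_prefixes_subset_Zq[OF \<open>eps \<le> n\<close> \<open>0 < q\<close>] by blast
  have "run (locate_and_recover q n eps) x eps =
          (x, padded_prefixes q n eps @ map (\<lambda>v. overwrite_on E v y) [0..<q])"
    using run_recover_on[OF x y close]
    unfolding locate_and_recover_def run_query_all found by (simp add: E)
  then show "fst (run (locate_and_recover q n eps) x eps) = x"
    and "set (snd (run (locate_and_recover q n eps) x eps)) \<subseteq> Zq q n"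
    and "length (snd (run (locate_and_recover q n eps) x eps)) = q ^ (n - eps) + q"
    using padded_prefixes_subset_Zq[OF \<open>eps \<le> n\<close> \<open>0 < q\<close>] overwrite_on_Zq[OF y]
    by (auto simp: length_padded_prefixes)
qed

theorem theorem2:
  shows "\<exists>C::nat. \<forall>q n eps. q \<ge> 2 \<longrightarrow> n \<ge> 1 \<longrightarrow> eps \<le> n \<longrightarrow>
     (\<exists>S::strategy. \<forall>x \<in> Zq q n.
        fst (run S x eps) = x \<and>
        set (snd (run S x eps)) \<subseteq> Zq q n \<and>
        length (snd (run S x eps)) \<le> C * (q ^ (n - eps) + q))"
proof (intro exI[of _ 1] allI impI)
  fix q n eps :: nat
  assume "q \<ge> 2" "n \<ge> 1" "eps \<le> n"
  then show "\<exists>S. \<forall>x \<in> Zq q n. fst (run S x eps) = x \<and> set (snd (run S x eps)) \<subseteq> Zq q n \<and>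
              length (snd (run S x eps)) \<le> 1 * (q ^ (n - eps) + q)"
    using run_locate_and_recover[of _ q n eps] by (intro exI[of _ "locate_and_recover q n eps"]) simp
qed

end
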